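(* Let $\omega\in(0,1]$, $R_j>0$, $M^{(j)}>0$, and let $F^{(j)}$ and $g$ be as in the context, with $\|F^{(j)}(p,q,t)\|_{R_j}\le M^{(j)}$ and, for all $x\in\mathbb{C}$ with $|x|\le R_j^2$ and all $t\in\mathbb{R}^+$, $$\Re g(x,t)\ge\omega/2,\qquad |g(x,t)|\le\tfrac32\omega.$$ Let $\chi=\sum_{\underline\alpha}\mathcal{F}_{\underline\alpha}(pq,t)p^{\alpha_1}q^{\alpha_2}$ be the function defined in the context. Then for every $\delta\in(0,1)$, $$\sum_{\underline\alpha}\sup_{|x|\le R_j^2,\,t\ge0}|\mathcal{F}_{\underline\alpha}(x,t)|\,((1-\delta)R_j)^{|\underline\alpha|}\le\frac{4M^{(j)}}{\omega\delta^2},\qquad \sum_{\underline\alpha}\sup_{|x|\le R_j^2,\,t\ge0}|\partial_t\mathcal{F}_{\underline\alpha}(x,t)|\,((1-\delta)R_j)^{|\underline\alpha|}\le\frac{4M^{(j)}}{\omega\delta^2};$$ in particular the series defining $\chi$ and $\partial_t\chi$ converge on $\mathcal{Q}_{(1-\delta)R_j}\times\mathbb{R}^+$, are bounded there in modulus by $4M^{(j)}/(\omega\delta^2)$, and $\chi$ solves the homological equation $[g(pq,t)\,\eth+\partial_t]\chi=F^{(j)}$.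
   Context: $\mathbb{R}^+:=[0,\infty)$; $\mathcal{Q}_\rho:=\{(p,q)\in\mathbb{C}^2:|p|,|q|\le\rho\}$; multi-indices $\underline\alpha=(\alpha_1,\alpha_2)\in\mathbb{N}^2$, $|\underline\alpha|=\alpha_1+\alpha_2$. Taylor norm: $\|G\|_\rho:=\sum_{\underline\alpha}\sup_{t\in\mathbb{R}^+}|g_{\underline\alpha}(t)|\rho^{|\underline\alpha|}$ for $G=\sum g_{\underline\alpha}(t)p^{\alpha_1}q^{\alpha_2}$. $F^{(j)}(p,q,t)=\sum_{|\underline\alpha|\ge3,\ \alpha_1\ne\alpha_2}f_{\underline\alpha}(t)p^{\alpha_1}q^{\alpha_2}$ contains only "mixed" monomials, with each $f_{\underline\alpha}$ continuous on $\mathbb{R}^+$. $g(x,t)$ is a complex function, holomorphic in $x$ for $|x|\le R_j^2$ and continuous in $t\in\mathbb{R}^+$. $\eth:=q\partial_q-p\partial_p$. Set $A(x,t):=\int_0^tg(x,s)\,ds$ and, for each $\underline\alpha$, $\lambda:=\alpha_2-\alpha_1$. Define $\mathcal{F}_{\underline\alpha}\equiv0$ when $\alpha_1=\alpha_2$ or $f_{\underline\alpha}\equiv0$; otherwise $$\mathcal{F}_{\underline\alpha}(x,t):=e^{-\lambda A(x,t)}\Big[\mathcal{F}_{\underline\alpha,0}(x)+\int_0^te^{\lambda A(x,s)}f_{\underline\alpha}(s)\,ds\Big],$$ with $\mathcal{F}_{\underline\alpha,0}\equiv0$ if $\lambda>0$ and $\mathcal{F}_{\underline\alpha,0}(x):=-\int_0^\infty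 e^{\lambda A(x,s)}f_{\underline\alpha}(s)\,ds$ if $\lambda<0$ (so that then $\mathcal{F}_{\underline\alpha}(x,t)=-\int_t^\infty e^{\lambda(A(x,s)-A(x,t))}f_{\underline\alpha}(s)\,ds$). Then $\chi(p,q,t):=\sum_{\underline\alpha}\mathcal{F}_{\underline\alpha}(pq,t)p^{\alpha_1}q^{\alpha_2}$. *)

theory Defs
  imports "HOL-Analysis.Analysis"
begin

text \<open>Multi-indices are pairs (alpha1, alpha2) of naturals; a time-dependent Taylor
  series G = sum g_alpha(t) p^alpha1 q^alpha2 is represented by its coefficient
  function of type nat \<times> nat \<Rightarrow> real \<Rightarrow> complex (only t \<ge> 0 is relevant).\<close>

definition taylor_norm :: "(nat \<times> nat \<Rightarrow> real \<Rightarrow> complex) \<Rightarrow> real \<Rightarrow> ennreal" where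
  "taylor_norm G \<rho> =
     (\<Sum>\<^sub>\<infinity>\<alpha>. (SUP t\<in>{0..}. ennreal (cmod (G \<alpha> t))) * ennreal \<rho> ^ (fst \<alpha> + snd \<alpha>))"

definition taylor_eval :: "(nat \<times> nat \<Rightarrow> real \<Rightarrow> complex) \<Rightarrow> complex \<Rightarrow> complex \<Rightarrow> real \<Rightarrow> complex" where
  "taylor_eval G p q t = (\<Sum>\<^sub>\<infinity>\<alpha>. G \<alpha> t * p ^ fst \<alpha> * q ^ snd \<alpha>)"

definition Aint :: "(complex \<Rightarrow> real \<Rightarrow> complex) \<Rightarrow> complex \<Rightarrow> real \<Rightarrow> complex" where
  "Aint g x t = integral {0..t} (\<lambda>s. g x s)"

definition lam :: "nat \<times> nat \<Rightarrow> complex" where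
  "lam \<alpha> = of_int (int (snd \<alpha>) - int (fst \<alpha>))"

definition Fcoef0 :: "(nat \<times> nat \<Rightarrow> real \<Rightarrow> complex) \<Rightarrow> (complex \<Rightarrow> real \<Rightarrow> complex)
    \<Rightarrow> nat \<times> nat \<Rightarrow> complex \<Rightarrow> complex" where
  "Fcoef0 f g \<alpha> x =
     (if fst \<alpha> < snd \<alpha> then 0
      else - integral {0..} (\<lambda>s. exp (lam \<alpha> * Aint g x s) * f \<alpha> s))"

definition Fcoef :: "(nat \<times> nat \<Rightarrow> real \<Rightarrow> complex) \<Rightarrow> (complex \<Rightarrow> real \<Rightarrow> complex)
    \<Rightarrow> nat \<times> nat \<Rightarrow> complex \<Rightarrow> real \<Rightarrow> complex" where
  "Fcoef f g \<alpha> x t =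
     (if fst \<alpha> = snd \<alpha> \<or> (\<forall>s\<ge>0. f \<alpha> s = 0) then 0
      else exp (- lam \<alpha> * Aint g x t) *
             (Fcoef0 f g \<alpha> x + integral {0..t} (\<lambda>s. exp (lam \<alpha> * Aint g x s) * f \<alpha> s)))"

definition chi :: "(nat \<times> nat \<Rightarrow> real \<Rightarrow> complex) \<Rightarrow> (complex \<Rightarrow> real \<Rightarrow> complex)
    \<Rightarrow> complex \<Rightarrow> complex \<Rightarrow> real \<Rightarrow> complex" where
  "chi f g p q t = (\<Sum>\<^sub>\<infinity>\<alpha>. Fcoef f g \<alpha> (p * q) t * p ^ fst \<alpha> * q ^ snd \<alpha>)"

end

theory Submission
  imports Defs "HOL-Complex_Analysis.Complex_Analysis"
begin

text \<open>Each coefficient solves the linear equation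
  \<open>\<partial>\<^sub>t \<F>\<^sub>\<alpha> + \<lambda> g(x,t) \<F>\<^sub>\<alpha> = f\<^sub>\<alpha>\<close> with \<open>\<lambda> = \<alpha>\<^sub>2 - \<alpha>\<^sub>1\<close>. Since \<open>Re g \<ge> \<omega>/2\<close>,
  the factor \<open>exp (\<lambda> A)\<close> decays in one direction of time, and the choice of \<open>\<F>\<^sub>\<alpha>\<^sub>,\<^sub>0\<close>
  makes \<open>\<F>\<^sub>\<alpha>\<close> the Duhamel integral taken from \<open>0\<close> when \<open>\<lambda> > 0\<close> and from \<open>\<infinity>\<close> when
  \<open>\<lambda> < 0\<close>. Its kernel is bounded by \<open>exp (-|\<lambda>| \<omega> |t - s| / 2)\<close>, whence
  \<open>|\<lambda>| |\<F>\<^sub>\<alpha>| \<le> 2 sup |f\<^sub>\<alpha>| / \<omega>\<close>; with \<open>|g| \<le> 3\<omega>/2\<close> the equation then gives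
  \<open>|\<partial>\<^sub>t \<F>\<^sub>\<alpha>| \<le> 4 sup |f\<^sub>\<alpha>|\<close>. Weighting by \<open>R\<^bsup>|\<alpha>|\<^esup>\<close> and summing yields the bounds
  \<open>2M/\<omega>\<close> and \<open>4M\<close>, both below \<open>4M/(\<omega>\<delta>\<^sup>2)\<close>.

  Differentiation under the integral sign shows that \<open>\<F>\<^sub>\<alpha>\<close> is holomorphic in \<open>x\<close>, so the
  series for \<open>\<chi>\<close> converge uniformly near every point of the open polydisc of radius \<open>R\<close>
  and may be differentiated termwise in \<open>p\<close>, \<open>q\<close> and \<open>t\<close>. The operator \<open>\<eth>\<close> annihilates
  \<open>\<F>\<^sub>\<alpha>(pq)\<close> and multiplies \<open>p\<^bsup>\<alpha>\<^sub>1\<^esup> q\<^bsup>\<alpha>\<^sub>2\<^esup>\<close> by \<open>\<lambda>\<close>, so the termwise equations add up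
  to the homological equation.\<close>

lemma holomorphic_bounded_lipschitz:
  fixes h :: "complex \<Rightarrow> complex"
  assumes hol: "h holomorphic_on U" and U: "open U" and e: "0 < e"
    and sub: "cball z (2 * e) \<subseteq> U"
    and bnd: "\<And>x. x \<in> U \<Longrightarrow> cmod (h x) \<le> B"
    and y: "y \<in> cball z e" and w: "w \<in> cball z e"
  shows "cmod (h y - h w) \<le> B / e * cmod (y - w)"
proof (rule field_differentiable_bound[of "cball z e" h "deriv h"])
  fix v assume v: "v \<in> cball z e"
  have "cball v e \<subseteq> cball z (2 * e)"
  proof
    fix x assume "x \<in> cball v e"
    then show "x \<in> cball z (2 * e)" using v dist_triangle[of z x v] by simp
  qed
  then have cv: "cball v e \<subseteq> U" using sub by blast
  then have "v \<in> U" using e by auto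
  then show "(h has_field_derivative deriv h v) (at v within cball z e)"
    using holomorphic_derivI[OF hol U] by blast
  have "cmod ((deriv ^^ 1) h v) \<le> fact 1 * B / e ^ 1"
    using cv bnd e
    by (intro Cauchy_inequality holomorphic_on_subset[OF hol]
          holomorphic_on_imp_continuous_on[OF holomorphic_on_subset[OF hol]])
       (auto simp: dist_norm)
  then show "cmod (deriv h v) \<le> B / e" by simp
qed (use y w in auto)

text \<open>By the Cauchy estimate the difference quotients of the integrand are dominated by
  \<open>\<phi> / e\<close>, so dominated convergence applies.\<close>
lemma integral_difference_quotient_tendsto:
  fixes h :: "complex \<Rightarrow> real \<Rightarrow> complex"
  assumes U: "open U"
    and int: "\<And>x. x \<in> U \<Longrightarrow> h x integrable_on S"
    and hol: "\<And>s. s \<in> S \<Longrightarrow> (\<lambda>x. h x s) holomorphic_on U"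
    and majorant: "\<phi> integrable_on S"
    and bnd: "\<And>x s. x \<in> U \<Longrightarrow> s \<in> S \<Longrightarrow> cmod (h x s) \<le> \<phi> s"
    and e: "0 < e" "cball z (2 * e) \<subseteq> U"
    and X: "\<And>k. X k \<in> cball z e - {z}" and lim: "X \<longlonglongrightarrow> z"
  shows "(\<lambda>k. (integral S (h (X k)) - integral S (h z)) / (X k - z))
           \<longlonglongrightarrow> integral S (\<lambda>s. deriv (\<lambda>x. h x s) z)"
proof -
  have XU: "X k \<in> U" "z \<in> U" for k using X[of k] e by auto
  define quot where "quot k s = (h (X k) s - h z s) / (X k - z)" for k s
  have "(\<lambda>k. integral S (quot k)) \<longlonglongrightarrow> integral S (\<lambda>s. deriv (\<lambda>x. h x s) z)"
  proof (rule dominated_convergence(2))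
    show "quot k integrable_on S" for k
      unfolding quot_def using XU by (intro integrable_on_divide integrable_diff int)
    show "(\<lambda>s. \<phi> s / e) integrable_on S" using majorant by (rule integrable_on_divide)
    fix k s assume s: "s \<in> S"
    show "norm (quot k s) \<le> \<phi> s / e"
      using holomorphic_bounded_lipschitz[OF hol[OF s] U e, of "\<phi> s" "X k" z] bnd[OF _ s] X[of k] e
      by (auto simp: quot_def norm_divide divide_simps)
    have "((\<lambda>y. (h y s - h z s) / (y - z)) \<longlongrightarrow> deriv (\<lambda>x. h x s) z) (at z)"
      using holomorphic_derivI[OF hol[OF s] U XU(2)] by (simp add: has_field_derivative_iff)
    then show "(\<lambda>k. quot k s) \<longlonglongrightarrow> deriv (\<lambda>x. h x s) z"
      unfolding tendsto_at_iff_sequentially comp_def quot_def using X lim by auto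
  qed
  moreover have "integral S (quot k) = (integral S (h (X k)) - integral S (h z)) / (X k - z)" for k
    unfolding quot_def using XU by (subst integral_divide, subst integral_diff) (auto intro!: int)
  ultimately show ?thesis by simp
qed

lemma holomorphic_on_parametric_integral:
  fixes h :: "complex \<Rightarrow> real \<Rightarrow> complex"
  assumes U: "open U"
    and int: "\<And>x. x \<in> U \<Longrightarrow> h x integrable_on S"
    and hol: "\<And>s. s \<in> S \<Longrightarrow> (\<lambda>x. h x s) holomorphic_on U"
    and majorant: "\<phi> integrable_on S"
    and bnd: "\<And>x s. x \<in> U \<Longrightarrow> s \<in> S \<Longrightarrow> cmod (h x s) \<le> \<phi> s"
  shows "(\<lambda>x. integral S (h x)) holomorphic_on U"
  unfolding holomorphic_on_def
proof
  fix z assume z: "z \<in> U"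
  obtain e where e: "0 < e" "cball z (2 * e) \<subseteq> U"
    using open_contains_cball[of U] U z by (metis field_sum_of_halves half_gt_zero mult_2)
  have "((\<lambda>y. (integral S (h y) - integral S (h z)) / (y - z))
      \<longlongrightarrow> integral S (\<lambda>s. deriv (\<lambda>x. h x s) z)) (at z within ball z e)"
    unfolding tendsto_at_iff_sequentially comp_def
    by (auto intro!: integral_difference_quotient_tendsto[OF assms e] simp: less_imp_le)
  then have "((\<lambda>x. integral S (h x)) has_field_derivative integral S (\<lambda>s. deriv (\<lambda>x. h x s) z)) (at z)"
    using has_field_derivative_iff at_within_open[of z "ball z e"] e by force
  then show "(\<lambda>x. integral S (h x)) field_differentiable at z within U"
    using field_differentiable_at_within field_differentiable_def by blast
qed

lemma at_within_Ici_eq_Icc: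
  fixes t :: real
  shows "at t within {0..t + 1} = at t within {0..}"
  by (rule at_within_nhd[of t "{t - 1<..<t + 1}"]) auto

lemma integral_has_vector_derivative_Ici:
  fixes h :: "real \<Rightarrow> 'a::banach"
  assumes "continuous_on {0..} h" "0 \<le> t"
  shows "((\<lambda>u. integral {0..u} h) has_vector_derivative h t) (at t within {0..})"
proof -
  have "continuous_on {0..t + 1} h" using assms(1) by (rule continuous_on_subset) auto
  then show ?thesis
    using integral_has_vector_derivative[of 0 "t + 1" h t] assms(2) by (simp add: at_within_Ici_eq_Icc)
qed

lemma at_within_Ici_neq_bot:
  fixes t :: real
  assumes "0 \<le> t"
  shows "at t within {0..} \<noteq> bot"
  using trivial_limit_within[of t "{0..t + 1}"] assms by (simp add: at_within_Ici_eq_Icc)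

lemma has_integral_exp_decay_Icc:
  fixes c t :: real
  assumes "0 < c" "0 \<le> t"
  shows "((\<lambda>s. exp (- c * (t - s))) has_integral (1 - exp (- c * t)) / c) {0..t}"
proof -
  have "((\<lambda>s. exp (- c * (t - s))) has_integral
          exp (- c * (t - t)) / c - exp (- c * (t - 0)) / c) {0..t}"
    using assms
    by (intro fundamental_theorem_of_calculus[where f = "\<lambda>s. exp (- c * (t - s)) / c"])
       (auto intro!: derivative_eq_intros simp flip: has_real_derivative_iff_has_vector_derivative)
  then show ?thesis by (simp add: diff_divide_distrib)
qed

lemma has_integral_exp_decay_Ici:
  fixes c t :: real
  assumes "0 < c"
  shows "((\<lambda>s. exp (- c * (s - t))) has_integral 1 / c) {t..}"
proof -
  have "((\<lambda>s. exp (c * t) * exp (- c * s)) has_integral exp (c * t) * (exp (- c * t) / c)) {t..}"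
    using has_integral_exp_minus_to_infinity[OF assms] by (rule has_integral_mult_right)
  moreover have "(\<lambda>s. exp (c * t) * exp (- c * s)) = (\<lambda>s. exp (- c * (s - t)))"
    by (simp add: exp_add[symmetric] algebra_simps)
  moreover have "exp (c * t) * (exp (- c * t) / c) = 1 / c"
    by (simp add: exp_minus)
  ultimately show ?thesis by metis
qed

lemma has_sum_diff:
  fixes f g :: "'i \<Rightarrow> 'a::topological_ab_group_add"
  assumes "(f has_sum a) A" "(g has_sum b) A"
  shows "((\<lambda>i. f i - g i) has_sum a - b) A"
  using has_sum_add[OF assms(1), of "\<lambda>i. - g i" "- b"] assms(2) by (simp add: has_sum_uminus)

lemma summable_on_norm_majorant:
  fixes c :: "'i \<Rightarrow> 'a::banach"
  assumes bnd: "\<And>i. norm (c i) \<le> B i" and B: "B summable_on A"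
  shows "c summable_on A" "norm (infsum c A) \<le> infsum B A"
proof -
  have n: "(\<lambda>i. norm (c i)) summable_on A"
    using B bnd by (rule summable_on_comparison_test) auto
  then show "c summable_on A" by (rule abs_summable_summable)
  have "norm (infsum c A) \<le> infsum (\<lambda>i. norm (c i)) A" using n by (rule norm_infsum_bound)
  also have "\<dots> \<le> infsum B A" using n B bnd by (rule infsum_mono)
  finally show "norm (infsum c A) \<le> infsum B A" .
qed

lemma norm_linearisation_remainder_le:
  fixes c c' :: "real \<Rightarrow> 'a::real_normed_vector"
  assumes S: "convex S" "t \<in> S" "y \<in> S"
    and der: "\<And>s. s \<in> S \<Longrightarrow> (c has_vector_derivative c' s) (at s within S)"
    and bnd: "\<And>s. s \<in> S \<Longrightarrow> norm (c' s) \<le> B"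
  shows "norm ((1 / norm (y - t)) *\<^sub>R (c y - (c t + (y - t) *\<^sub>R c' t))) \<le> 2 * B"
proof (cases "y = t")
  case True
  then show ?thesis using order_trans[OF norm_ge_zero bnd[OF S(2)]] by simp
next
  case False
  have "norm (c y - c t) \<le> B * norm (y - t)"
    using differentiable_bound[OF S(1), of c "\<lambda>s h. h *\<^sub>R c' s" B y t] der bnd S
    by (auto simp: has_vector_derivative_def onorm_scaleR_left onorm_id)
  moreover have "norm ((y - t) *\<^sub>R c' t) \<le> B * norm (y - t)"
    using bnd[OF S(2)] by (simp add: mult.commute mult_right_mono)
  moreover have "norm (c y - (c t + (y - t) *\<^sub>R c' t)) \<le> norm (c y - c t) + norm ((y - t) *\<^sub>R c' t)"
    by (metis diff_diff_eq norm_triangle_ineq4)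
  ultimately have "norm (c y - (c t + (y - t) *\<^sub>R c' t)) \<le> 2 * B * norm (y - t)" by linarith
  then show ?thesis using False by (simp add: divide_simps)
qed

text \<open>The normalised remainders of the linearisations are dominated by twice the majorant of
  the derivatives, so their sums converge uniformly and the limit may be taken termwise.\<close>
lemma has_vector_derivative_infsum:
  fixes c c' :: "'i \<Rightarrow> real \<Rightarrow> 'a::banach"
  assumes S: "convex S" and t: "t \<in> S"
    and der: "\<And>i s. s \<in> S \<Longrightarrow> (c i has_vector_derivative c' i s) (at s within S)"
    and bnd: "\<And>i s. s \<in> S \<Longrightarrow> norm (c' i s) \<le> B i"
    and B: "B summable_on UNIV"
    and summable: "\<And>s. s \<in> S \<Longrightarrow> (\<lambda>i. c i s) summable_on UNIV"
  shows "((\<lambda>s. \<Sum>\<^sub>\<infinity>i. c i s) has_vector_derivative (\<Sum>\<^sub>\<infinity>i. c' i t)) (at t within S)"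
proof -
  define D where "D = (\<Sum>\<^sub>\<infinity>i. c' i t)"
  define rem where "rem i y = c i y - (c i t + (y - t) *\<^sub>R c' i t)" for i y
  have rem_bnd: "norm ((1 / norm (y - t)) *\<^sub>R rem i y) \<le> 2 * B i" if "y \<in> S" for i y
    unfolding rem_def using S t that der bnd by (rule norm_linearisation_remainder_le)
  have "((\<lambda>y. \<Sum>\<^sub>\<infinity>i. (1 / norm (y - t)) *\<^sub>R rem i y) \<longlongrightarrow> 0) (at t within S)"
  proof (rule swap_uniform_limit)
    show "uniform_limit S (\<lambda>X y. \<Sum>i\<in>X. (1 / norm (y - t)) *\<^sub>R rem i y)
        (\<lambda>y. \<Sum>\<^sub>\<infinity>i. (1 / norm (y - t)) *\<^sub>R rem i y) (finite_subsets_at_top UNIV)"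
      using rem_bnd summable_on_cmult_right[OF B] by (intro Weierstrass_m_test_general) auto
    have "((\<lambda>y. (1 / norm (y - t)) *\<^sub>R rem i y) \<longlongrightarrow> 0) (at t within S)" for i
      using der[OF t, of i] unfolding has_vector_derivative_def has_derivative_within rem_def by simp
    then show "\<forall>\<^sub>F X in finite_subsets_at_top UNIV.
        ((\<lambda>y. \<Sum>i\<in>X. (1 / norm (y - t)) *\<^sub>R rem i y) \<longlongrightarrow> 0) (at t within S)"
      by (intro always_eventually allI tendsto_null_sum)
  qed auto
  moreover have "(\<Sum>\<^sub>\<infinity>i. (1 / norm (y - t)) *\<^sub>R rem i y)
      = (1 / norm (y - t)) *\<^sub>R ((\<Sum>\<^sub>\<infinity>i. c i y) - ((\<Sum>\<^sub>\<infinity>i. c i t) + (y - t) *\<^sub>R D))"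
    if "y \<in> S" for y
  proof -
    have "((\<lambda>i. c' i t) has_sum D) UNIV"
      unfolding D_def using summable_on_norm_majorant(1)[OF bnd[OF t] B] by simp
    then have "((\<lambda>i. c i t + (y - t) *\<^sub>R c' i t) has_sum (\<Sum>\<^sub>\<infinity>i. c i t) + (y - t) *\<^sub>R D) UNIV"
      using summable[OF t] by (intro has_sum_add has_sum_scaleR) auto
    then have "((\<lambda>i. rem i y) has_sum (\<Sum>\<^sub>\<infinity>i. c i y) - ((\<Sum>\<^sub>\<infinity>i. c i t) + (y - t) *\<^sub>R D)) UNIV"
      unfolding rem_def using summable[OF that] by (intro has_sum_diff) auto
    then show ?thesis by (intro infsumI has_sum_scaleR)
  qed
  ultimately have "((\<lambda>y. (1 / norm (y - t)) *\<^sub>R ((\<Sum>\<^sub>\<infinity>i. c i y) - ((\<Sum>\<^sub>\<infinity>i. c i t) + (y - t) *\<^sub>R D)))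
      \<longlongrightarrow> 0) (at t within S)"
    by (elim Lim_transform_eventually) (auto simp: eventually_at_filter)
  then show ?thesis
    unfolding has_vector_derivative_def has_derivative_within D_def
    by (simp add: bounded_linear_scaleR_left)
qed

lemma has_field_derivative_infsum:
  fixes c c' :: "'i \<Rightarrow> complex \<Rightarrow> complex"
  assumes r: "0 < r"
    and der: "\<And>i w. w \<in> cball z r \<Longrightarrow> (c i has_field_derivative c' i w) (at w)"
    and bnd: "\<And>i w. w \<in> cball z r \<Longrightarrow> norm (c i w) \<le> B i"
    and B: "B summable_on UNIV"
  obtains D where "((\<lambda>w. \<Sum>\<^sub>\<infinity>i. c i w) has_field_derivative D) (at z)"
    "((\<lambda>i. c' i z) has_sum D) UNIV"
proof -
  have cont: "continuous_on (cball z r) (c i)" for i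
    using der DERIV_isCont continuous_at_imp_continuous_on by blast
  have ul: "uniform_limit (cball z r) (\<lambda>X w. \<Sum>i\<in>X. c i w) (\<lambda>w. \<Sum>\<^sub>\<infinity>i. c i w)
      (finite_subsets_at_top UNIV)"
    using bnd B by (intro Weierstrass_m_test_general) auto
  obtain D' where D': "\<And>w. w \<in> ball z r \<Longrightarrow>
      ((\<lambda>w. \<Sum>\<^sub>\<infinity>i. c i w) has_field_derivative D' w) (at w) \<and>
      ((\<lambda>X. \<Sum>i\<in>X. c' i w) \<longlongrightarrow> D' w) (finite_subsets_at_top UNIV)"
  proof (rule has_complex_derivative_uniform_limit[OF _ ul _ r])
    show "\<forall>\<^sub>F X in finite_subsets_at_top UNIV. continuous_on (cball z r) (\<lambda>w. \<Sum>i\<in>X. c i w) \<and>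
        (\<forall>w\<in>ball z r. ((\<lambda>w. \<Sum>i\<in>X. c i w) has_field_derivative (\<Sum>i\<in>X. c' i w)) (at w))"
      using cont der by (intro always_eventually allI conjI ballI continuous_on_sum DERIV_sum) auto
  qed auto
  show ?thesis using D'[of z] r by (intro that) (auto simp: has_sum_def)
qed

lemma has_field_derivative_monomial_left:
  fixes h :: "complex \<Rightarrow> complex"
  assumes "(h has_field_derivative D) (at (w * q))"
  shows "((\<lambda>w. h (w * q) * w ^ a * q ^ b) has_field_derivative
           D * q * w ^ a * q ^ b + h (w * q) * (of_nat a * w ^ (a - 1)) * q ^ b) (at w)"
proof -
  have "((\<lambda>w. h (w * q)) has_field_derivative D * q) (at w)"
    by (rule DERIV_chain2[where g = "\<lambda>w. w * q", OF assms]) (auto intro!: derivative_eq_intros)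
  then show ?thesis
    by (auto intro!: derivative_eq_intros simp: algebra_simps)
qed

lemma has_field_derivative_monomial_right:
  fixes h :: "complex \<Rightarrow> complex"
  assumes "(h has_field_derivative D) (at (p * w))"
  shows "((\<lambda>w. h (p * w) * p ^ a * w ^ b) has_field_derivative
           D * p * p ^ a * w ^ b + h (p * w) * p ^ a * (of_nat b * w ^ (b - 1))) (at w)"
proof -
  have "((\<lambda>w. h (p * w)) has_field_derivative D * p) (at w)"
    by (rule DERIV_chain2[where g = "\<lambda>w. p * w", OF assms]) (auto intro!: derivative_eq_intros)
  then show ?thesis
    by (auto intro!: derivative_eq_intros simp: algebra_simps)
qed

text \<open>Applied to \<open>F (p * q) * p ^ a * q ^ b\<close>, the Euler operator \<open>q \<partial>\<^sub>q - p \<partial>\<^sub>p\<close>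
  annihilates the factor \<open>F (p * q)\<close>: the two chain-rule terms containing \<open>D = F' (p * q)\<close>
  cancel.\<close>
lemma euler_operator_monomial:
  fixes D F p q :: complex
  shows "q * (D * p * p ^ a * q ^ b + F * p ^ a * (of_nat b * q ^ (b - 1)))
       - p * (D * q * p ^ a * q ^ b + F * (of_nat a * p ^ (a - 1)) * q ^ b)
       = lam (a, b) * F * p ^ a * q ^ b"
  by (cases a; cases b) (simp_all add: lam_def algebra_simps)

lemma norm_mult_less_square:
  fixes p q :: complex
  shows "cmod p < r \<Longrightarrow> cmod q < r \<Longrightarrow> cmod (p * q) < r\<^sup>2"
  by (simp add: norm_mult power2_eq_square mult_strict_mono')

lemma norm_mult_le_square:
  fixes p q :: complex
  shows "cmod p \<le> r \<Longrightarrow> cmod q \<le> r \<Longrightarrow> cmod (p * q) \<le> r\<^sup>2"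
  by (simp add: norm_mult power2_eq_square mult_mono')

lemma norm_less_in_cball_half_gap:
  fixes w z :: complex
  assumes "cmod z < r" "w \<in> cball z ((r - cmod z) / 2)"
  shows "cmod w < r"
  using assms norm_triangle_sub[of w z] by (simp add: dist_norm norm_minus_commute)

section \<open>The coefficient equations\<close>

lemma lam_eq_of_real: "lam \<alpha> = complex_of_real (real (snd \<alpha>) - real (fst \<alpha>))"
  by (simp add: lam_def)

lemma norm_lam: "cmod (lam \<alpha>) = \<bar>real (snd \<alpha>) - real (fst \<alpha>)\<bar>"
  by (simp only: lam_eq_of_real norm_of_real)

locale homological_equation =
  fixes \<omega> R M :: real
    and f :: "nat \<times> nat \<Rightarrow> real \<Rightarrow> complex"
    and g :: "complex \<Rightarrow> real \<Rightarrow> complex"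
  assumes \<omega>: "0 < \<omega>" "\<omega> \<le> 1"
    and R: "0 < R" and M: "0 < M"
    and f_mixed: "\<And>\<alpha> t. 0 \<le> t \<Longrightarrow> fst \<alpha> + snd \<alpha> < 3 \<or> fst \<alpha> = snd \<alpha> \<Longrightarrow> f \<alpha> t = 0"
    and f_cont: "\<And>\<alpha>. continuous_on {0..} (f \<alpha>)"
    and g_hol: "\<And>t. 0 \<le> t \<Longrightarrow> (\<lambda>x. g x t) holomorphic_on cball 0 (R\<^sup>2)"
    and g_cont: "\<And>x. cmod x \<le> R\<^sup>2 \<Longrightarrow> continuous_on {0..} (g x)"
    and F_norm: "taylor_norm f R \<le> ennreal M"
    and g_re: "\<And>x t. cmod x \<le> R\<^sup>2 \<Longrightarrow> 0 \<le> t \<Longrightarrow> Re (g x t) \<ge> \<omega> / 2"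
    and g_abs: "\<And>x t. cmod x \<le> R\<^sup>2 \<Longrightarrow> 0 \<le> t \<Longrightarrow> cmod (g x t) \<le> 3 / 2 * \<omega>"
begin

lemma integrable_g: "cmod x \<le> R\<^sup>2 \<Longrightarrow> 0 \<le> s \<Longrightarrow> g x integrable_on {s..t}"
  by (intro integrable_continuous_interval continuous_on_subset[OF g_cont]) auto

lemma Aint_has_vector_derivative:
  "cmod x \<le> R\<^sup>2 \<Longrightarrow> 0 \<le> t \<Longrightarrow> (Aint g x has_vector_derivative g x t) (at t within {0..})"
  unfolding Aint_def[abs_def] by (rule integral_has_vector_derivative_Ici[OF g_cont])

lemma continuous_on_Aint: "cmod x \<le> R\<^sup>2 \<Longrightarrow> continuous_on {0..} (Aint g x)"
  unfolding continuous_on_eq_continuous_within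
  by (auto intro: has_vector_derivative_continuous Aint_has_vector_derivative)

lemma Re_Aint_increment_ge:
  assumes x: "cmod x \<le> R\<^sup>2" and "0 \<le> s" "s \<le> t"
  shows "\<omega> / 2 * (t - s) \<le> Re (Aint g x t - Aint g x s)"
proof -
  have "Aint g x t = Aint g x s + integral {s..t} (g x)"
    using Henstock_Kurzweil_Integration.integral_combine[of 0 s t "g x"] integrable_g[OF x, of 0 t] assms
    by (simp add: Aint_def)
  moreover have "\<omega> / 2 * (t - s) \<le> integral {s..t} (g x) \<bullet> 1"
    using integral_component_lbound_real[of "g x" s t "\<omega> / 2" 1] integrable_g[OF x] g_re[OF x] assms
    by auto
  ultimately show ?thesis by simp
qed

lemma norm_Aint_le:
  assumes x: "cmod x \<le> R\<^sup>2" and t: "0 \<le> t"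
  shows "cmod (Aint g x t) \<le> 3 / 2 * \<omega> * t"
proof -
  have "cmod (Aint g x t) \<le> integral {0..t} (\<lambda>s. 3 / 2 * \<omega>)"
    unfolding Aint_def using integrable_g[OF x] g_abs[OF x]
    by (intro integral_norm_bound_integral) auto
  then show ?thesis using t by (simp add: mult_ac)
qed

lemma holomorphic_on_Aint: "0 \<le> t \<Longrightarrow> (\<lambda>x. Aint g x t) holomorphic_on ball 0 (R\<^sup>2)"
  unfolding Aint_def
proof (rule holomorphic_on_parametric_integral[where \<phi> = "\<lambda>_. 3 / 2 * \<omega>"])
  show "cmod (g x s) \<le> 3 / 2 * \<omega>" if "x \<in> ball 0 (R\<^sup>2)" "s \<in> {0..t}" for x s
    using that g_abs[of x s] by simp
qed (auto intro: holomorphic_on_subset[OF g_hol] integrable_g)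

text \<open>\<open>enn2real\<close> would send an infinite supremum to \<open>0\<close>; \<open>F_norm\<close> rules this out
  (\<open>SUP_norm_f_eq_fsup\<close>).\<close>
definition fsup :: "nat \<times> nat \<Rightarrow> real" where
  "fsup \<alpha> = enn2real (SUP t\<in>{0..}. ennreal (cmod (f \<alpha> t)))"

definition fweight :: "nat \<times> nat \<Rightarrow> real" where
  "fweight \<alpha> = fsup \<alpha> * R ^ (fst \<alpha> + snd \<alpha>)"

lemma fsup_nonneg: "0 \<le> fsup \<alpha>"
  by (simp add: fsup_def)

lemma fweight_nonneg: "0 \<le> fweight \<alpha>"
  using R by (simp add: fweight_def fsup_nonneg)

lemma SUP_norm_f_eq_fsup: "(SUP t\<in>{0..}. ennreal (cmod (f \<alpha> t))) = ennreal (fsup \<alpha>)"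
proof -
  let ?S = "\<lambda>\<alpha>. SUP t\<in>{0..}. ennreal (cmod (f \<alpha> t))"
  have "?S \<alpha> * ennreal R ^ (fst \<alpha> + snd \<alpha>) \<le> taylor_norm f R"
    unfolding taylor_norm_def
    using infsum_mono_neutral[of "\<lambda>\<alpha>. ?S \<alpha> * ennreal R ^ (fst \<alpha> + snd \<alpha>)" "{\<alpha>}"
        "\<lambda>\<alpha>. ?S \<alpha> * ennreal R ^ (fst \<alpha> + snd \<alpha>)" UNIV]
    by (simp add: nonneg_summable_on_complete)
  then have "?S \<alpha> * ennreal R ^ (fst \<alpha> + snd \<alpha>) < top"
    using F_norm by (meson ennreal_less_top le_less_trans order_trans)
  then have "?S \<alpha> < top" using R by (auto simp: ennreal_mult_less_top ennreal_power)
  then show ?thesis by (simp add: fsup_def)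
qed

lemma norm_f_le_fsup: "0 \<le> t \<Longrightarrow> cmod (f \<alpha> t) \<le> fsup \<alpha>"
  using SUP_upper[of t "{0..}" "\<lambda>t. ennreal (cmod (f \<alpha> t))"] fsup_nonneg
  by (simp add: SUP_norm_f_eq_fsup)

lemma sum_fweight_le: "finite A \<Longrightarrow> (\<Sum>\<alpha>\<in>A. fweight \<alpha>) \<le> M"
proof -
  assume A: "finite A"
  let ?h = "\<lambda>\<alpha>. (SUP t\<in>{0..}. ennreal (cmod (f \<alpha> t))) * ennreal R ^ (fst \<alpha> + snd \<alpha>)"
  have "ennreal (\<Sum>\<alpha>\<in>A. fweight \<alpha>) = (\<Sum>\<alpha>\<in>A. ?h \<alpha>)"
    using R fsup_nonneg fweight_nonneg
    by (simp add: sum_ennreal[symmetric] SUP_norm_f_eq_fsup fweight_def ennreal_mult ennreal_power)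
  also have "\<dots> = infsum ?h A" using A by simp
  also have "\<dots> \<le> infsum ?h UNIV"
    by (rule infsum_mono_neutral) (auto simp: nonneg_summable_on_complete)
  also have "\<dots> \<le> M" using F_norm by (simp add: taylor_norm_def)
  finally show ?thesis using M by simp
qed

lemma fweight_summable: "fweight summable_on UNIV"
  using fweight_nonneg sum_fweight_le
  by (intro nonneg_bdd_above_summable_on) (auto intro!: bdd_aboveI[of _ M])

lemma infsum_fweight_le: "(\<Sum>\<^sub>\<infinity>\<alpha>. fweight \<alpha>) \<le> M"
  using fweight_summable sum_fweight_le by (rule infsum_le_finite_sums)

definition decay :: "nat \<times> nat \<Rightarrow> real" where
  "decay \<alpha> = \<bar>real (snd \<alpha>) - real (fst \<alpha>)\<bar> * \<omega> / 2"

definition duhamel :: "nat \<times> nat \<Rightarrow> complex \<Rightarrow> real \<Rightarrow> real \<Rightarrow> complex" where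
  "duhamel \<alpha> x t s = exp (lam \<alpha> * (Aint g x s - Aint g x t)) * f \<alpha> s"

lemma decay_pos: "fst \<alpha> \<noteq> snd \<alpha> \<Longrightarrow> 0 < decay \<alpha>"
  using \<omega> by (simp add: decay_def)

text \<open>The sign of \<open>lam \<alpha>\<close> selects the direction of time in which
  \<open>exp (lam \<alpha> * A)\<close> decays, since \<open>Re A\<close> grows at rate at least \<open>\<omega> / 2\<close>.\<close>
lemma norm_duhamel_le:
  assumes x: "cmod x \<le> R\<^sup>2" and s: "0 \<le> s" and t: "0 \<le> t"
    and dir: "(fst \<alpha> < snd \<alpha> \<and> s \<le> t) \<or> (snd \<alpha> < fst \<alpha> \<and> t \<le> s)"
  shows "cmod (duhamel \<alpha> x t s) \<le> fsup \<alpha> * exp (- decay \<alpha> * \<bar>s - t\<bar>)"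
proof -
  let ?l = "real (snd \<alpha>) - real (fst \<alpha>)"
  have "?l * Re (Aint g x s - Aint g x t) \<le> ?l * (\<omega> / 2 * (s - t))"
    using dir
  proof
    assume "fst \<alpha> < snd \<alpha> \<and> s \<le> t"
    then show ?thesis
      using Re_Aint_increment_ge[OF x s, of t] by (intro mult_left_mono) (auto simp: field_simps)
  next
    assume "snd \<alpha> < fst \<alpha> \<and> t \<le> s"
    then show ?thesis
      using Re_Aint_increment_ge[OF x t, of s] by (intro mult_left_mono_neg) (auto simp: algebra_simps)
  qed
  also have "\<dots> = - decay \<alpha> * \<bar>s - t\<bar>"
    using dir by (auto simp: decay_def abs_if algebra_simps)
  finally have "?l * Re (Aint g x s - Aint g x t) \<le> - decay \<alpha> * \<bar>s - t\<bar>" .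
  then have "cmod (exp (lam \<alpha> * (Aint g x s - Aint g x t))) \<le> exp (- decay \<alpha> * \<bar>s - t\<bar>)"
    by (simp add: norm_exp_eq_Re lam_eq_of_real)
  then show ?thesis
    unfolding duhamel_def norm_mult
    using norm_f_le_fsup[OF s, of \<alpha>] fsup_nonneg[of \<alpha>] by (simp add: mult_mono mult.commute)
qed

lemma continuous_on_duhamel: "cmod x \<le> R\<^sup>2 \<Longrightarrow> continuous_on {0..} (duhamel \<alpha> x t)"
  unfolding duhamel_def using continuous_on_Aint f_cont by (intro continuous_intros) auto

lemma duhamel_eq:
  "duhamel \<alpha> x t = (\<lambda>s. exp (- lam \<alpha> * Aint g x t) * (exp (lam \<alpha> * Aint g x s) * f \<alpha> s))"
  by (simp add: fun_eq_iff duhamel_def right_diff_distrib exp_diff exp_minus field_simps)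

lemma integrable_duhamel_Ici:
  assumes "snd \<alpha> < fst \<alpha>" and x: "cmod x \<le> R\<^sup>2" and t: "0 \<le> t"
  shows "duhamel \<alpha> x t integrable_on {t..}"
proof (rule measurable_bounded_by_integrable_imp_integrable)
  show "duhamel \<alpha> x t \<in> borel_measurable (lebesgue_on {t..})"
    using x t by (intro continuous_imp_measurable_on_sets_lebesgue
        continuous_on_subset[OF continuous_on_duhamel]) auto
  show "(\<lambda>s. fsup \<alpha> * exp (- decay \<alpha> * (s - t))) integrable_on {t..}"
    using has_integral_exp_decay_Ici[OF decay_pos, of \<alpha> t] assms(1)
      has_integral_mult_right[of _ _ _ "fsup \<alpha>"]
    by (auto simp: integrable_on_def)
  show "cmod (duhamel \<alpha> x t s) \<le> fsup \<alpha> * exp (- decay \<alpha> * (s - t))" if "s \<in> {t..}" for s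
    using norm_duhamel_le[OF x, of s t \<alpha>] assms that by auto
qed auto

lemma Fcoef_eq_integral_past:
  assumes "fst \<alpha> < snd \<alpha>" and "\<not> (\<forall>s\<ge>0. f \<alpha> s = 0)"
  shows "Fcoef f g \<alpha> x t = integral {0..t} (duhamel \<alpha> x t)"
  using assms by (auto simp: Fcoef_def Fcoef0_def duhamel_eq)

lemma Fcoef_eq_integral_future:
  assumes future: "snd \<alpha> < fst \<alpha>" and nz: "\<not> (\<forall>s\<ge>0. f \<alpha> s = 0)"
    and x: "cmod x \<le> R\<^sup>2" and t: "0 \<le> t"
  shows "Fcoef f g \<alpha> x t = - integral {t..} (duhamel \<alpha> x t)"
proof -
  let ?E = "\<lambda>s. exp (lam \<alpha> * Aint g x s) * f \<alpha> s"
  have "?E integrable_on {0..t}"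
    using continuous_on_duhamel[OF x, of \<alpha> 0]
    by (intro integrable_continuous_interval)
       (auto simp: duhamel_def Aint_def elim: continuous_on_subset)
  moreover have "?E integrable_on {t..}"
    using integrable_on_mult_right[OF integrable_duhamel_Ici[OF future x t],
        of "exp (lam \<alpha> * Aint g x t)"]
    by (simp add: duhamel_eq exp_minus field_simps)
  moreover have "negligible ({0..t} \<inter> {t..})"
    by (rule negligible_subset[OF negligible_sing[of t]]) auto
  ultimately have "(?E has_integral integral {0..t} ?E + integral {t..} ?E) ({0..t} \<union> {t..})"
    by (intro has_integral_Un) auto
  moreover have "{0..t} \<union> {t..} = {0..}" using t by auto
  ultimately have "integral {0..} ?E = integral {0..t} ?E + integral {t..} ?E"
    by (simp add: integral_unique)
  then show ?thesis
    using future nz by (auto simp: Fcoef_def Fcoef0_def duhamel_eq)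
qed

lemma integrable_duhamel_Icc:
  assumes "cmod x \<le> R\<^sup>2"
  shows "duhamel \<alpha> x t integrable_on {0..u}"
  by (rule integrable_continuous_interval continuous_on_subset[OF continuous_on_duhamel[OF assms]])+
    auto

lemma norm_Fcoef_le_past:
  assumes x: "cmod x \<le> R\<^sup>2" and t: "0 \<le> t" and past: "fst \<alpha> < snd \<alpha>"
  shows "cmod (Fcoef f g \<alpha> x t) \<le> fsup \<alpha> / decay \<alpha>"
proof (cases "\<forall>s\<ge>0. f \<alpha> s = 0")
  case True
  then show ?thesis using past fsup_nonneg[of \<alpha>] decay_pos[of \<alpha>] by (simp add: Fcoef_def)
next
  case nz: False
  let ?k = "\<lambda>s. fsup \<alpha> * exp (- decay \<alpha> * (t - s))"
  have k: "(?k has_integral fsup \<alpha> * ((1 - exp (- decay \<alpha> * t)) / decay \<alpha>)) {0..t}"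
    using has_integral_exp_decay_Icc[OF decay_pos t] past by (intro has_integral_mult_right) auto
  have "cmod (Fcoef f g \<alpha> x t) \<le> integral {0..t} ?k"
    unfolding Fcoef_eq_integral_past[OF past nz]
    using k integrable_duhamel_Icc[OF x] norm_duhamel_le[OF x _ t, of _ \<alpha>] past
    by (intro integral_norm_bound_integral) (auto simp: integrable_on_def)
  also have "\<dots> = fsup \<alpha> * ((1 - exp (- decay \<alpha> * t)) / decay \<alpha>)"
    using k by (rule integral_unique)
  also have "\<dots> \<le> fsup \<alpha> * (1 / decay \<alpha>)"
    using decay_pos[of \<alpha>] past fsup_nonneg[of \<alpha>] by (intro mult_left_mono divide_right_mono) auto
  finally show ?thesis by simp
qed

lemma norm_Fcoef_le_future:
  assumes x: "cmod x \<le> R\<^sup>2" and t: "0 \<le> t" and future: "snd \<alpha> < fst \<alpha>"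
  shows "cmod (Fcoef f g \<alpha> x t) \<le> fsup \<alpha> / decay \<alpha>"
proof (cases "\<forall>s\<ge>0. f \<alpha> s = 0")
  case True
  then show ?thesis using future fsup_nonneg[of \<alpha>] decay_pos[of \<alpha>] by (simp add: Fcoef_def)
next
  case nz: False
  let ?k = "\<lambda>s. fsup \<alpha> * exp (- decay \<alpha> * (s - t))"
  have k: "(?k has_integral fsup \<alpha> * (1 / decay \<alpha>)) {t..}"
    using has_integral_exp_decay_Ici[OF decay_pos] future by (intro has_integral_mult_right) auto
  have "cmod (Fcoef f g \<alpha> x t) \<le> integral {t..} ?k"
    unfolding Fcoef_eq_integral_future[OF future nz x t] norm_minus_cancel
    using k integrable_duhamel_Ici[OF future x t] norm_duhamel_le[OF x _ t, of _ \<alpha>] future t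
    by (intro integral_norm_bound_integral) (auto simp: integrable_on_def)
  also have "\<dots> = fsup \<alpha> * (1 / decay \<alpha>)"
    using k by (rule integral_unique)
  finally show ?thesis by simp
qed

lemma norm_lam_mult_Fcoef_le:
  assumes x: "cmod x \<le> R\<^sup>2" and t: "0 \<le> t"
  shows "cmod (lam \<alpha>) * cmod (Fcoef f g \<alpha> x t) \<le> 2 * fsup \<alpha> / \<omega>"
proof (cases "fst \<alpha> = snd \<alpha>")
  case True
  then show ?thesis using fsup_nonneg[of \<alpha>] \<omega> by (simp add: Fcoef_def)
next
  case False
  then have "cmod (Fcoef f g \<alpha> x t) \<le> fsup \<alpha> / decay \<alpha>"
    using norm_Fcoef_le_past[OF x t] norm_Fcoef_le_future[OF x t] by (cases "fst \<alpha> < snd \<alpha>") auto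
  then have "cmod (lam \<alpha>) * cmod (Fcoef f g \<alpha> x t) \<le> cmod (lam \<alpha>) * (fsup \<alpha> / decay \<alpha>)"
    by (rule mult_left_mono) simp
  also have "\<dots> = 2 * fsup \<alpha> / \<omega>"
    using False \<omega> by (simp add: norm_lam decay_def field_simps)
  finally show ?thesis .
qed

lemma norm_Fcoef_le:
  assumes x: "cmod x \<le> R\<^sup>2" and t: "0 \<le> t"
  shows "cmod (Fcoef f g \<alpha> x t) \<le> 2 * fsup \<alpha> / \<omega>"
proof (cases "fst \<alpha> = snd \<alpha>")
  case True
  then show ?thesis using fsup_nonneg[of \<alpha>] \<omega> by (simp add: Fcoef_def)
next
  case False
  then have "1 \<le> cmod (lam \<alpha>)" by (simp add: norm_lam)
  then have "cmod (Fcoef f g \<alpha> x t) \<le> cmod (lam \<alpha>) * cmod (Fcoef f g \<alpha> x t)"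
    by (simp add: mult_le_cancel_right1)
  then show ?thesis using norm_lam_mult_Fcoef_le[OF x t, of \<alpha>] by linarith
qed

lemma continuous_on_exp_Aint_f:
  "cmod x \<le> R\<^sup>2 \<Longrightarrow> continuous_on {0..} (\<lambda>s. exp (c * Aint g x s) * f \<alpha> s)"
  using continuous_on_Aint f_cont by (intro continuous_intros) auto

lemma Fcoef_has_vector_derivative:
  assumes x: "cmod x \<le> R\<^sup>2" and t: "0 \<le> t"
  shows "((\<lambda>s. Fcoef f g \<alpha> x s) has_vector_derivative
           f \<alpha> t - lam \<alpha> * g x t * Fcoef f g \<alpha> x t) (at t within {0..})"
proof (cases "fst \<alpha> = snd \<alpha> \<or> (\<forall>s\<ge>0. f \<alpha> s = 0)")
  case True
  then have "f \<alpha> t = 0" using f_mixed[OF t, of \<alpha>] t by auto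
  with True show ?thesis by (auto simp: Fcoef_def)
next
  case False
  let ?E = "\<lambda>s. exp (lam \<alpha> * Aint g x s) * f \<alpha> s"
  let ?P = "\<lambda>s. exp (- lam \<alpha> * Aint g x s)"
  let ?Q = "\<lambda>s. Fcoef0 f g \<alpha> x + integral {0..s} ?E"
  have eq: "(\<lambda>s. Fcoef f g \<alpha> x s) = (\<lambda>s. ?P s * ?Q s)"
    unfolding Fcoef_def if_not_P[OF False] ..
  have dA: "((\<lambda>s. - lam \<alpha> * Aint g x s) has_vector_derivative - lam \<alpha> * g x t) (at t within {0..})"
    using Aint_has_vector_derivative[OF x t] by (rule has_vector_derivative_mult_right)
  have dP: "(?P has_vector_derivative (- lam \<alpha> * g x t) * ?P t) (at t within {0..})"
    using field_vector_diff_chain_within[OF dA, of exp "?P t"]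
    by (simp add: o_def DERIV_exp has_field_derivative_at_within)
  have dQ: "(?Q has_vector_derivative ?E t) (at t within {0..})"
    using has_vector_derivative_add[OF has_vector_derivative_const
        integral_has_vector_derivative_Ici[OF continuous_on_exp_Aint_f[OF x, of "lam \<alpha>" \<alpha>] t]]
    by simp
  show ?thesis
    unfolding eq using has_vector_derivative_mult[OF dP dQ]
    by (rule has_vector_derivative_eq_rhs) (simp add: exp_minus field_simps)
qed

lemma vector_derivative_Fcoef:
  "cmod x \<le> R\<^sup>2 \<Longrightarrow> 0 \<le> t \<Longrightarrow> vector_derivative (\<lambda>s. Fcoef f g \<alpha> x s) (at t within {0..})
     = f \<alpha> t - lam \<alpha> * g x t * Fcoef f g \<alpha> x t"
  by (intro vector_derivative_within at_within_Ici_neq_bot Fcoef_has_vector_derivative)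

lemma norm_vector_derivative_Fcoef_le:
  assumes x: "cmod x \<le> R\<^sup>2" and t: "0 \<le> t"
  shows "cmod (vector_derivative (\<lambda>s. Fcoef f g \<alpha> x s) (at t within {0..})) \<le> 4 * fsup \<alpha>"
proof -
  have "cmod (lam \<alpha> * g x t * Fcoef f g \<alpha> x t)
      = cmod (g x t) * (cmod (lam \<alpha>) * cmod (Fcoef f g \<alpha> x t))"
    by (simp add: norm_mult)
  also have "\<dots> \<le> 3 / 2 * \<omega> * (2 * fsup \<alpha> / \<omega>)"
    using g_abs[OF x t] norm_lam_mult_Fcoef_le[OF x t, of \<alpha>] \<omega> by (intro mult_mono) auto
  finally have "cmod (lam \<alpha> * g x t * Fcoef f g \<alpha> x t) \<le> 3 * fsup \<alpha>"
    using \<omega> by simp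
  then show ?thesis
    using norm_f_le_fsup[OF t, of \<alpha>] norm_triangle_ineq4[of "f \<alpha> t" "lam \<alpha> * g x t * Fcoef f g \<alpha> x t"]
    by (simp add: vector_derivative_Fcoef[OF x t])
qed

lemma holomorphic_on_Fcoef0:
  assumes "fst \<alpha> \<noteq> snd \<alpha>"
  shows "(\<lambda>x. Fcoef0 f g \<alpha> x) holomorphic_on ball 0 (R\<^sup>2)"
proof (cases "fst \<alpha> < snd \<alpha>")
  case True
  then show ?thesis by (simp add: Fcoef0_def)
next
  case False
  with assms have future: "snd \<alpha> < fst \<alpha>" by simp
  have "duhamel \<alpha> x 0 = (\<lambda>s. exp (lam \<alpha> * Aint g x s) * f \<alpha> s)" for x
    by (simp add: fun_eq_iff duhamel_def Aint_def)
  moreover have "(\<lambda>x. integral {0..} (duhamel \<alpha> x 0)) holomorphic_on ball 0 (R\<^sup>2)"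
  proof (rule holomorphic_on_parametric_integral[where \<phi> = "\<lambda>s. fsup \<alpha> * exp (- decay \<alpha> * (s - 0))"])
    have "0 < decay \<alpha>" using future by (intro decay_pos) simp
    from has_integral_mult_right[OF has_integral_exp_decay_Ici[OF this, of 0], of "fsup \<alpha>"]
    show "(\<lambda>s. fsup \<alpha> * exp (- decay \<alpha> * (s - 0))) integrable_on {0..}"
      by (auto simp: integrable_on_def)
    show "(\<lambda>x. duhamel \<alpha> x 0 s) holomorphic_on ball 0 (R\<^sup>2)" if "s \<in> {0..}" for s
      using that unfolding duhamel_def by (auto intro!: holomorphic_intros holomorphic_on_Aint)
    show "cmod (duhamel \<alpha> x 0 s) \<le> fsup \<alpha> * exp (- decay \<alpha> * (s - 0))"
      if "x \<in> ball 0 (R\<^sup>2)" "s \<in> {0..}" for x s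
      using norm_duhamel_le[of x s 0 \<alpha>] that future by simp
  qed (use integrable_duhamel_Ici[OF future] in auto)
  ultimately show ?thesis using future by (simp add: Fcoef0_def holomorphic_intros)
qed

lemma holomorphic_on_integral_exp_Aint_f:
  assumes t: "0 \<le> t"
  shows "(\<lambda>x. integral {0..t} (\<lambda>s. exp (lam \<alpha> * Aint g x s) * f \<alpha> s)) holomorphic_on ball 0 (R\<^sup>2)"
proof (rule holomorphic_on_parametric_integral
    [where \<phi> = "\<lambda>_. fsup \<alpha> * exp (cmod (lam \<alpha>) * (3 / 2 * \<omega> * t))"])
  show "cmod (exp (lam \<alpha> * Aint g x s) * f \<alpha> s) \<le> fsup \<alpha> * exp (cmod (lam \<alpha>) * (3 / 2 * \<omega> * t))"
    if "x \<in> ball 0 (R\<^sup>2)" "s \<in> {0..t}" for x s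
  proof -
    have x: "cmod x \<le> R\<^sup>2" using that(1) by simp
    have "Re (lam \<alpha> * Aint g x s) \<le> cmod (lam \<alpha>) * cmod (Aint g x s)"
      using complex_Re_le_cmod[of "lam \<alpha> * Aint g x s"] by (simp add: norm_mult)
    also have "\<dots> \<le> cmod (lam \<alpha>) * (3 / 2 * \<omega> * t)"
      using norm_Aint_le[OF x, of s] that(2) \<omega>
      by (intro mult_left_mono) (auto intro: order_trans[OF _ mult_left_mono[of s t]])
    finally have "cmod (exp (lam \<alpha> * Aint g x s)) \<le> exp (cmod (lam \<alpha>) * (3 / 2 * \<omega> * t))"
      by (simp add: norm_exp_eq_Re)
    then show ?thesis
      using norm_f_le_fsup[of s \<alpha>] that(2) fsup_nonneg[of \<alpha>]
      by (simp add: norm_mult mult_mono mult.commute)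
  qed
qed (auto intro!: holomorphic_intros holomorphic_on_Aint
       integrable_continuous_interval continuous_on_subset[OF continuous_on_exp_Aint_f])

lemma holomorphic_on_Fcoef:
  assumes t: "0 \<le> t"
  shows "(\<lambda>x. Fcoef f g \<alpha> x t) holomorphic_on ball 0 (R\<^sup>2)"
proof (cases "fst \<alpha> = snd \<alpha> \<or> (\<forall>s\<ge>0. f \<alpha> s = 0)")
  case True
  then show ?thesis by (simp add: Fcoef_def)
next
  case False
  then show ?thesis
    unfolding Fcoef_def if_not_P[OF False]
    using holomorphic_on_Fcoef0[of \<alpha>] holomorphic_on_integral_exp_Aint_f[OF t, of \<alpha>]
    by (auto intro!: holomorphic_intros holomorphic_on_Aint t)
qed

section \<open>The series \<open>\<chi>\<close>\<close>

lemma weighted_SUP_infsum_le: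
  fixes \<phi> :: "nat \<times> nat \<Rightarrow> 'b \<Rightarrow> real"
  assumes \<rho>: "0 \<le> \<rho>" "\<rho> \<le> R" and C: "0 \<le> C"
    and bnd: "\<And>\<alpha> y. y \<in> D \<Longrightarrow> \<phi> \<alpha> y \<le> C * fsup \<alpha>"
  shows "(\<Sum>\<^sub>\<infinity>\<alpha>. (SUP y\<in>D. ennreal (\<phi> \<alpha> y)) * ennreal \<rho> ^ (fst \<alpha> + snd \<alpha>)) \<le> ennreal (C * M)"
proof -
  let ?h = "\<lambda>\<alpha>. (SUP y\<in>D. ennreal (\<phi> \<alpha> y)) * ennreal \<rho> ^ (fst \<alpha> + snd \<alpha>)"
  have h_le: "?h \<alpha> \<le> ennreal (C * fweight \<alpha>)" for \<alpha>
  proof -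
    have "(SUP y\<in>D. ennreal (\<phi> \<alpha> y)) \<le> ennreal (C * fsup \<alpha>)"
      by (intro SUP_least ennreal_leI bnd)
    moreover have "ennreal \<rho> ^ (fst \<alpha> + snd \<alpha>) \<le> ennreal (R ^ (fst \<alpha> + snd \<alpha>))"
      using \<rho> by (auto simp: ennreal_power intro!: ennreal_leI power_mono)
    ultimately have "?h \<alpha> \<le> ennreal (C * fsup \<alpha>) * ennreal (R ^ (fst \<alpha> + snd \<alpha>))"
      by (rule mult_mono') auto
    then show ?thesis
      using C fsup_nonneg[of \<alpha>] R by (simp add: fweight_def ennreal_mult'[symmetric] mult.assoc)
  qed
  have "infsum ?h UNIV = (SUP A\<in>{A. finite A \<and> A \<subseteq> UNIV}. sum ?h A)"
    by (rule nonneg_infsum_complete) auto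
  also have "\<dots> \<le> ennreal (C * M)"
  proof (rule SUP_least)
    fix A :: "(nat \<times> nat) set" assume "A \<in> {A. finite A \<and> A \<subseteq> UNIV}"
    then have A: "finite A" by simp
    have "sum ?h A \<le> (\<Sum>\<alpha>\<in>A. ennreal (C * fweight \<alpha>))"
      by (rule sum_mono) (rule h_le)
    also have "\<dots> = ennreal (C * (\<Sum>\<alpha>\<in>A. fweight \<alpha>))"
      using C fweight_nonneg by (simp add: sum_ennreal sum_distrib_left)
    also have "\<dots> \<le> ennreal (C * M)"
      using sum_fweight_le[OF A] C by (intro ennreal_leI mult_left_mono)
    finally show "sum ?h A \<le> ennreal (C * M)" .
  qed
  finally show ?thesis .
qed

lemma SUP_Fcoef_infsum_le:
  assumes "0 \<le> \<rho>" "\<rho> \<le> R"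
  shows "(\<Sum>\<^sub>\<infinity>\<alpha>. (SUP xt\<in>{(x, t). cmod x \<le> R\<^sup>2 \<and> 0 \<le> t}.
            ennreal (cmod (Fcoef f g \<alpha> (fst xt) (snd xt)))) * ennreal \<rho> ^ (fst \<alpha> + snd \<alpha>))
         \<le> ennreal (2 / \<omega> * M)"
  using assms \<omega> norm_Fcoef_le by (intro weighted_SUP_infsum_le) auto

lemma SUP_vector_derivative_Fcoef_infsum_le:
  assumes "0 \<le> \<rho>" "\<rho> \<le> R"
  shows "(\<Sum>\<^sub>\<infinity>\<alpha>. (SUP xt\<in>{(x, t). cmod x \<le> R\<^sup>2 \<and> 0 \<le> t}.
            ennreal (cmod (vector_derivative (\<lambda>s. Fcoef f g \<alpha> (fst xt) s) (at (snd xt) within {0..}))))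
            * ennreal \<rho> ^ (fst \<alpha> + snd \<alpha>))
         \<le> ennreal (4 * M)"
  using assms norm_vector_derivative_Fcoef_le by (intro weighted_SUP_infsum_le) auto

lemma monomial_series_majorant:
  fixes c :: "nat \<times> nat \<Rightarrow> complex"
  assumes K: "0 \<le> K" and c: "\<And>\<alpha>. cmod (c \<alpha>) \<le> K * fsup \<alpha>"
    and p: "cmod p \<le> R" and q: "cmod q \<le> R"
  shows "\<And>\<alpha>. cmod (c \<alpha> * p ^ fst \<alpha> * q ^ snd \<alpha>) \<le> K * fweight \<alpha>"
    and "(\<lambda>\<alpha>. c \<alpha> * p ^ fst \<alpha> * q ^ snd \<alpha>) summable_on UNIV"
    and "cmod (\<Sum>\<^sub>\<infinity>\<alpha>. c \<alpha> * p ^ fst \<alpha> * q ^ snd \<alpha>) \<le> K * M"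
proof -
  show bnd: "cmod (c \<alpha> * p ^ fst \<alpha> * q ^ snd \<alpha>) \<le> K * fweight \<alpha>" for \<alpha>
  proof -
    have "cmod (c \<alpha> * p ^ fst \<alpha> * q ^ snd \<alpha>) = cmod (c \<alpha>) * (cmod p ^ fst \<alpha> * cmod q ^ snd \<alpha>)"
      by (simp add: norm_mult norm_power)
    also have "\<dots> \<le> (K * fsup \<alpha>) * (R ^ fst \<alpha> * R ^ snd \<alpha>)"
      using c[of \<alpha>] p q R K fsup_nonneg[of \<alpha>] by (intro mult_mono power_mono mult_nonneg_nonneg) auto
    finally show ?thesis by (simp add: fweight_def power_add mult_ac)
  qed
  have B: "(\<lambda>\<alpha>. K * fweight \<alpha>) summable_on UNIV"
    using fweight_summable by (rule summable_on_cmult_right)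
  show "(\<lambda>\<alpha>. c \<alpha> * p ^ fst \<alpha> * q ^ snd \<alpha>) summable_on UNIV"
    using summable_on_norm_majorant(1)[OF bnd B] .
  have "cmod (\<Sum>\<^sub>\<infinity>\<alpha>. c \<alpha> * p ^ fst \<alpha> * q ^ snd \<alpha>) \<le> (\<Sum>\<^sub>\<infinity>\<alpha>. K * fweight \<alpha>)"
    using summable_on_norm_majorant(2)[OF bnd B] .
  also have "\<dots> = K * (\<Sum>\<^sub>\<infinity>\<alpha>. fweight \<alpha>)"
    using fweight_summable by (rule infsum_cmult_right)
  also have "\<dots> \<le> K * M" using infsum_fweight_le K by (rule mult_left_mono)
  finally show "cmod (\<Sum>\<^sub>\<infinity>\<alpha>. c \<alpha> * p ^ fst \<alpha> * q ^ snd \<alpha>) \<le> K * M" .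
qed

lemma chi_series_bound:
  assumes p: "cmod p \<le> R" and q: "cmod q \<le> R" and t: "0 \<le> t"
  shows "(\<lambda>\<alpha>. Fcoef f g \<alpha> (p * q) t * p ^ fst \<alpha> * q ^ snd \<alpha>) summable_on UNIV"
    and "cmod (chi f g p q t) \<le> 2 / \<omega> * M"
  using monomial_series_majorant(2,3)[OF _ _ p q, of "2 / \<omega>"] \<omega>
    norm_Fcoef_le[OF norm_mult_le_square[OF p q] t]
  by (auto simp: chi_def)

lemma chi_derivative_series_bound:
  assumes p: "cmod p \<le> R" and q: "cmod q \<le> R" and t: "0 \<le> t"
  shows "(\<lambda>\<alpha>. vector_derivative (\<lambda>s. Fcoef f g \<alpha> (p * q) s) (at t within {0..})
            * p ^ fst \<alpha> * q ^ snd \<alpha>) summable_on UNIV"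
    and "cmod (\<Sum>\<^sub>\<infinity>\<alpha>. vector_derivative (\<lambda>s. Fcoef f g \<alpha> (p * q) s) (at t within {0..})
            * p ^ fst \<alpha> * q ^ snd \<alpha>) \<le> 4 * M"
  using monomial_series_majorant(2,3)[OF _ _ p q, of 4]
    norm_vector_derivative_Fcoef_le[OF norm_mult_le_square[OF p q] t]
  by auto

lemma chi_has_vector_derivative:
  assumes p: "cmod p \<le> R" and q: "cmod q \<le> R" and t: "0 \<le> t"
  shows "((\<lambda>s. chi f g p q s) has_vector_derivative
           (\<Sum>\<^sub>\<infinity>\<alpha>. vector_derivative (\<lambda>s. Fcoef f g \<alpha> (p * q) s) (at t within {0..})
              * p ^ fst \<alpha> * q ^ snd \<alpha>)) (at t within {0..})"
  unfolding chi_def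
proof (rule has_vector_derivative_infsum[where B = "\<lambda>\<alpha>. 4 * fweight \<alpha>"])
  have pq: "cmod (p * q) \<le> R\<^sup>2" using p q by (rule norm_mult_le_square)
  fix \<alpha> and s :: real assume "s \<in> {0..}"
  then have s: "0 \<le> s" by simp
  show "((\<lambda>s. Fcoef f g \<alpha> (p * q) s * p ^ fst \<alpha> * q ^ snd \<alpha>) has_vector_derivative
      vector_derivative (\<lambda>s. Fcoef f g \<alpha> (p * q) s) (at s within {0..}) * p ^ fst \<alpha> * q ^ snd \<alpha>)
      (at s within {0..})"
    unfolding vector_derivative_Fcoef[OF pq s]
    by (intro has_vector_derivative_mult_left Fcoef_has_vector_derivative[OF pq s])
  show "cmod (vector_derivative (\<lambda>s. Fcoef f g \<alpha> (p * q) s) (at s within {0..})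
      * p ^ fst \<alpha> * q ^ snd \<alpha>) \<le> 4 * fweight \<alpha>"
    using monomial_series_majorant(1)[where K = 4 and
        c = "\<lambda>\<alpha>. vector_derivative (\<lambda>s. Fcoef f g \<alpha> (p * q) s) (at s within {0..})", OF _ _ p q]
      norm_vector_derivative_Fcoef_le[OF pq s]
    by auto
  show "(\<lambda>\<alpha>. Fcoef f g \<alpha> (p * q) s * p ^ fst \<alpha> * q ^ snd \<alpha>) summable_on UNIV"
    using chi_series_bound(1)[OF p q s] .
qed (use t fweight_summable summable_on_cmult_right in auto)

lemma Fcoef_has_field_derivative:
  "0 \<le> t \<Longrightarrow> cmod x < R\<^sup>2 \<Longrightarrow>
    ((\<lambda>x. Fcoef f g \<alpha> x t) has_field_derivative deriv (\<lambda>x. Fcoef f g \<alpha> x t) x) (at x)"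
  by (rule holomorphic_derivI[OF holomorphic_on_Fcoef]) auto

lemma norm_Fcoef_monomial_le:
  assumes "cmod p \<le> R" "cmod q \<le> R" "0 \<le> t"
  shows "cmod (Fcoef f g \<alpha> (p * q) t * p ^ fst \<alpha> * q ^ snd \<alpha>) \<le> 2 / \<omega> * fweight \<alpha>"
  using monomial_series_majorant(1)[where K = "2 / \<omega>" and c = "\<lambda>\<alpha>. Fcoef f g \<alpha> (p * q) t"]
    norm_Fcoef_le[OF norm_mult_le_square] assms \<omega>
  by auto

lemma chi_has_field_derivative_left:
  assumes p: "cmod p < R" and q: "cmod q < R" and t: "0 \<le> t"
  obtains dp where "((\<lambda>p'. chi f g p' q t) has_field_derivative dp) (at p)"
    and "((\<lambda>\<alpha>. deriv (\<lambda>x. Fcoef f g \<alpha> x t) (p * q) * q * p ^ fst \<alpha> * q ^ snd \<alpha>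
            + Fcoef f g \<alpha> (p * q) t * (of_nat (fst \<alpha>) * p ^ (fst \<alpha> - 1)) * q ^ snd \<alpha>) has_sum dp) UNIV"
proof -
  obtain dp
    where "((\<lambda>w. \<Sum>\<^sub>\<infinity>\<alpha>. Fcoef f g \<alpha> (w * q) t * w ^ fst \<alpha> * q ^ snd \<alpha>)
        has_field_derivative dp) (at p)"
    and "((\<lambda>\<alpha>. deriv (\<lambda>x. Fcoef f g \<alpha> x t) (p * q) * q * p ^ fst \<alpha> * q ^ snd \<alpha>
            + Fcoef f g \<alpha> (p * q) t * (of_nat (fst \<alpha>) * p ^ (fst \<alpha> - 1)) * q ^ snd \<alpha>) has_sum dp) UNIV"
  proof (rule has_field_derivative_infsum[where r = "(R - cmod p) / 2"])
    show "0 < (R - cmod p) / 2" using p by simp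
    show "(\<lambda>\<alpha>. 2 / \<omega> * fweight \<alpha>) summable_on UNIV"
      using fweight_summable by (rule summable_on_cmult_right)
    fix \<alpha> w assume "w \<in> cball p ((R - cmod p) / 2)"
    then have w: "cmod w < R" by (rule norm_less_in_cball_half_gap[OF p])
    show "((\<lambda>w. Fcoef f g \<alpha> (w * q) t * w ^ fst \<alpha> * q ^ snd \<alpha>) has_field_derivative
        deriv (\<lambda>x. Fcoef f g \<alpha> x t) (w * q) * q * w ^ fst \<alpha> * q ^ snd \<alpha>
        + Fcoef f g \<alpha> (w * q) t * (of_nat (fst \<alpha>) * w ^ (fst \<alpha> - 1)) * q ^ snd \<alpha>) (at w)"
      using Fcoef_has_field_derivative[OF t norm_mult_less_square[OF w q]]
      by (rule has_field_derivative_monomial_left)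
    show "cmod (Fcoef f g \<alpha> (w * q) t * w ^ fst \<alpha> * q ^ snd \<alpha>) \<le> 2 / \<omega> * fweight \<alpha>"
      using w q t by (intro norm_Fcoef_monomial_le) auto
  qed
  moreover have "(\<lambda>w. chi f g w q t) = (\<lambda>w. \<Sum>\<^sub>\<infinity>\<alpha>. Fcoef f g \<alpha> (w * q) t * w ^ fst \<alpha> * q ^ snd \<alpha>)"
    by (simp add: chi_def)
  ultimately show ?thesis using that by simp
qed

lemma chi_has_field_derivative_right:
  assumes p: "cmod p < R" and q: "cmod q < R" and t: "0 \<le> t"
  obtains dq where "((\<lambda>q'. chi f g p q' t) has_field_derivative dq) (at q)"
    and "((\<lambda>\<alpha>. deriv (\<lambda>x. Fcoef f g \<alpha> x t) (p * q) * p * p ^ fst \<alpha> * q ^ snd \<alpha>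
            + Fcoef f g \<alpha> (p * q) t * p ^ fst \<alpha> * (of_nat (snd \<alpha>) * q ^ (snd \<alpha> - 1))) has_sum dq) UNIV"
proof -
  obtain dq
    where "((\<lambda>w. \<Sum>\<^sub>\<infinity>\<alpha>. Fcoef f g \<alpha> (p * w) t * p ^ fst \<alpha> * w ^ snd \<alpha>)
        has_field_derivative dq) (at q)"
    and "((\<lambda>\<alpha>. deriv (\<lambda>x. Fcoef f g \<alpha> x t) (p * q) * p * p ^ fst \<alpha> * q ^ snd \<alpha>
            + Fcoef f g \<alpha> (p * q) t * p ^ fst \<alpha> * (of_nat (snd \<alpha>) * q ^ (snd \<alpha> - 1))) has_sum dq) UNIV"
  proof (rule has_field_derivative_infsum[where r = "(R - cmod q) / 2"])
    show "0 < (R - cmod q) / 2" using q by simp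
    show "(\<lambda>\<alpha>. 2 / \<omega> * fweight \<alpha>) summable_on UNIV"
      using fweight_summable by (rule summable_on_cmult_right)
    fix \<alpha> w assume "w \<in> cball q ((R - cmod q) / 2)"
    then have w: "cmod w < R" by (rule norm_less_in_cball_half_gap[OF q])
    show "((\<lambda>w. Fcoef f g \<alpha> (p * w) t * p ^ fst \<alpha> * w ^ snd \<alpha>) has_field_derivative
        deriv (\<lambda>x. Fcoef f g \<alpha> x t) (p * w) * p * p ^ fst \<alpha> * w ^ snd \<alpha>
        + Fcoef f g \<alpha> (p * w) t * p ^ fst \<alpha> * (of_nat (snd \<alpha>) * w ^ (snd \<alpha> - 1))) (at w)"
      using Fcoef_has_field_derivative[OF t norm_mult_less_square[OF p w]]
      by (rule has_field_derivative_monomial_right)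
    show "cmod (Fcoef f g \<alpha> (p * w) t * p ^ fst \<alpha> * w ^ snd \<alpha>) \<le> 2 / \<omega> * fweight \<alpha>"
      using p w t by (intro norm_Fcoef_monomial_le) auto
  qed
  moreover have "(\<lambda>w. chi f g p w t) = (\<lambda>w. \<Sum>\<^sub>\<infinity>\<alpha>. Fcoef f g \<alpha> (p * w) t * p ^ fst \<alpha> * w ^ snd \<alpha>)"
    by (simp add: chi_def)
  ultimately show ?thesis using that by simp
qed

lemma euler_operator_chi:
  assumes p: "cmod p < R" and q: "cmod q < R" and t: "0 \<le> t"
  obtains dp dq where "((\<lambda>p'. chi f g p' q t) has_field_derivative dp) (at p)"
    and "((\<lambda>q'. chi f g p q' t) has_field_derivative dq) (at q)"
    and "((\<lambda>\<alpha>. lam \<alpha> * Fcoef f g \<alpha> (p * q) t * p ^ fst \<alpha> * q ^ snd \<alpha>) has_sum q * dq - p * dp) UNIV"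
proof -
  let ?D = "\<lambda>\<alpha>. deriv (\<lambda>x. Fcoef f g \<alpha> x t) (p * q)"
  let ?F = "\<lambda>\<alpha>. Fcoef f g \<alpha> (p * q) t"
  obtain dp where dp: "((\<lambda>p'. chi f g p' q t) has_field_derivative dp) (at p)"
    "((\<lambda>\<alpha>. ?D \<alpha> * q * p ^ fst \<alpha> * q ^ snd \<alpha> + ?F \<alpha> * (of_nat (fst \<alpha>) * p ^ (fst \<alpha> - 1)) * q ^ snd \<alpha>)
      has_sum dp) UNIV"
    using chi_has_field_derivative_left[OF p q t] .
  obtain dq where dq: "((\<lambda>q'. chi f g p q' t) has_field_derivative dq) (at q)"
    "((\<lambda>\<alpha>. ?D \<alpha> * p * p ^ fst \<alpha> * q ^ snd \<alpha> + ?F \<alpha> * p ^ fst \<alpha> * (of_nat (snd \<alpha>) * q ^ (snd \<alpha> - 1)))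
      has_sum dq) UNIV"
    using chi_has_field_derivative_right[OF p q t] .
  have euler:
    "q * (?D \<alpha> * p * p ^ fst \<alpha> * q ^ snd \<alpha>
          + ?F \<alpha> * p ^ fst \<alpha> * (of_nat (snd \<alpha>) * q ^ (snd \<alpha> - 1)))
      - p * (?D \<alpha> * q * p ^ fst \<alpha> * q ^ snd \<alpha>
          + ?F \<alpha> * (of_nat (fst \<alpha>) * p ^ (fst \<alpha> - 1)) * q ^ snd \<alpha>)
      = lam \<alpha> * ?F \<alpha> * p ^ fst \<alpha> * q ^ snd \<alpha>" for \<alpha>
    using euler_operator_monomial[of q "?D \<alpha>" p "fst \<alpha>" "snd \<alpha>" "?F \<alpha>"] by simp
  have "((\<lambda>\<alpha>. lam \<alpha> * ?F \<alpha> * p ^ fst \<alpha> * q ^ snd \<alpha>) has_sum q * dq - p * dp) UNIV"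
    using has_sum_diff[OF has_sum_cmult_right[OF dq(2), where c = q]
        has_sum_cmult_right[OF dp(2), where c = p]]
    unfolding euler .
  with dp(1) dq(1) show ?thesis by (rule that)
qed

lemma chi_homological_equation:
  assumes p: "cmod p < R" and q: "cmod q < R" and t: "0 \<le> t"
  shows "\<exists>dp dq. ((\<lambda>p'. chi f g p' q t) has_field_derivative dp) (at p) \<and>
           ((\<lambda>q'. chi f g p q' t) has_field_derivative dq) (at q) \<and>
           g (p * q) t * (q * dq - p * dp)
             + (\<Sum>\<^sub>\<infinity>\<alpha>. vector_derivative (\<lambda>s. Fcoef f g \<alpha> (p * q) s) (at t within {0..})
                  * p ^ fst \<alpha> * q ^ snd \<alpha>)
           = taylor_eval f p q t"
proof -
  let ?V = "\<lambda>\<alpha>. vector_derivative (\<lambda>s. Fcoef f g \<alpha> (p * q) s) (at t within {0..})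
              * p ^ fst \<alpha> * q ^ snd \<alpha>"
  obtain dp dq where dp: "((\<lambda>p'. chi f g p' q t) has_field_derivative dp) (at p)"
    and dq: "((\<lambda>q'. chi f g p q' t) has_field_derivative dq) (at q)"
    and euler: "((\<lambda>\<alpha>. lam \<alpha> * Fcoef f g \<alpha> (p * q) t * p ^ fst \<alpha> * q ^ snd \<alpha>)
        has_sum q * dq - p * dp) UNIV"
    using euler_operator_chi[OF p q t] .
  have "(?V has_sum (\<Sum>\<^sub>\<infinity>\<alpha>. ?V \<alpha>)) UNIV"
    using chi_derivative_series_bound(1)[OF _ _ t] p q by simp
  with euler have "((\<lambda>\<alpha>. g (p * q) t * (lam \<alpha> * Fcoef f g \<alpha> (p * q) t * p ^ fst \<alpha> * q ^ snd \<alpha>) + ?V \<alpha>)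
      has_sum g (p * q) t * (q * dq - p * dp) + (\<Sum>\<^sub>\<infinity>\<alpha>. ?V \<alpha>)) UNIV"
    by (rule has_sum_add[OF has_sum_cmult_right])
  moreover have "g (p * q) t * (lam \<alpha> * Fcoef f g \<alpha> (p * q) t * p ^ fst \<alpha> * q ^ snd \<alpha>) + ?V \<alpha>
      = f \<alpha> t * p ^ fst \<alpha> * q ^ snd \<alpha>" for \<alpha>
    using norm_mult_less_square[OF p q] t by (simp add: vector_derivative_Fcoef algebra_simps)
  ultimately have "g (p * q) t * (q * dq - p * dp) + (\<Sum>\<^sub>\<infinity>\<alpha>. ?V \<alpha>) = taylor_eval f p q t"
    unfolding taylor_eval_def by (intro infsumI[symmetric]) simp
  with dp dq show ?thesis by blast
qed

lemma Fcoef_differentiable: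
  "cmod x \<le> R\<^sup>2 \<Longrightarrow> 0 \<le> t \<Longrightarrow> (\<lambda>s. Fcoef f g \<alpha> x s) differentiable (at t within {0..})"
  using Fcoef_has_vector_derivative by (rule differentiableI_vector)

end

lemma homological_constants_le:
  fixes \<omega> M \<delta> :: real
  assumes \<omega>: "0 < \<omega>" "\<omega> \<le> 1" and M: "0 < M" and \<delta>: "0 < \<delta>" "\<delta> < 1"
  shows "2 / \<omega> * M \<le> 4 * M / (\<omega> * \<delta>\<^sup>2)" and "4 * M \<le> 4 * M / (\<omega> * \<delta>\<^sup>2)"
proof -
  have \<delta>2: "0 < \<delta>\<^sup>2" "\<delta>\<^sup>2 \<le> 1" using \<delta> by (auto simp: power_le_one)
  have "2 / \<omega> * M \<le> 4 * M / \<omega>" using M \<omega> by (simp add: divide_simps)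
  also have "\<dots> \<le> 4 * M / (\<omega> * \<delta>\<^sup>2)"
    using M \<omega> \<delta>2 by (intro divide_left_mono) (auto intro: mult_left_le)
  finally show "2 / \<omega> * M \<le> 4 * M / (\<omega> * \<delta>\<^sup>2)" .
  have "0 < \<omega> * \<delta>\<^sup>2" "\<omega> * \<delta>\<^sup>2 \<le> 1" using \<omega> \<delta>2 by (auto intro: mult_le_one)
  then show "4 * M \<le> 4 * M / (\<omega> * \<delta>\<^sup>2)" using M by (simp add: le_divide_eq mult_left_le)
qed

theorem proposition1:
  fixes \<omega> R M :: real
    and f :: "nat \<times> nat \<Rightarrow> real \<Rightarrow> complex"
    and g :: "complex \<Rightarrow> real \<Rightarrow> complex"
  assumes \<omega>: "0 < \<omega>" "\<omega> \<le> 1"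
    and R: "0 < R" and M: "0 < M"
    and f_mixed: "\<And>\<alpha> t. 0 \<le> t \<Longrightarrow> fst \<alpha> + snd \<alpha> < 3 \<or> fst \<alpha> = snd \<alpha> \<Longrightarrow> f \<alpha> t = 0"
    and f_cont: "\<And>\<alpha>. continuous_on {0..} (f \<alpha>)"
    and g_hol: "\<And>t. 0 \<le> t \<Longrightarrow> (\<lambda>x. g x t) holomorphic_on cball 0 (R\<^sup>2)"
    and g_cont: "\<And>x. cmod x \<le> R\<^sup>2 \<Longrightarrow> continuous_on {0..} (g x)"
    and F_norm: "taylor_norm f R \<le> ennreal M"
    and g_re: "\<And>x t. cmod x \<le> R\<^sup>2 \<Longrightarrow> 0 \<le> t \<Longrightarrow> Re (g x t) \<ge> \<omega> / 2"
    and g_abs: "\<And>x t. cmod x \<le> R\<^sup>2 \<Longrightarrow> 0 \<le> t \<Longrightarrow> cmod (g x t) \<le> 3 / 2 * \<omega>"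
  shows "(\<forall>\<alpha> x t. cmod x \<le> R\<^sup>2 \<and> 0 \<le> t \<longrightarrow>
            (\<lambda>s. Fcoef f g \<alpha> x s) differentiable (at t within {0..})) \<and>
         (\<forall>\<delta>::real. 0 < \<delta> \<and> \<delta> < 1 \<longrightarrow>
            (\<Sum>\<^sub>\<infinity>\<alpha>. (SUP xt\<in>{(x, t). cmod x \<le> R\<^sup>2 \<and> 0 \<le> t}.
                         ennreal (cmod (Fcoef f g \<alpha> (fst xt) (snd xt))))
                      * ennreal ((1 - \<delta>) * R) ^ (fst \<alpha> + snd \<alpha>))
              \<le> ennreal (4 * M / (\<omega> * \<delta>\<^sup>2)) \<and>
            (\<Sum>\<^sub>\<infinity>\<alpha>. (SUP xt\<in>{(x, t). cmod x \<le> R\<^sup>2 \<and> 0 \<le> t}.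
                         ennreal (cmod (vector_derivative (\<lambda>s. Fcoef f g \<alpha> (fst xt) s)
                                          (at (snd xt) within {0..}))))
                      * ennreal ((1 - \<delta>) * R) ^ (fst \<alpha> + snd \<alpha>))
              \<le> ennreal (4 * M / (\<omega> * \<delta>\<^sup>2)) \<and>
            (\<forall>p q t. cmod p \<le> (1 - \<delta>) * R \<and> cmod q \<le> (1 - \<delta>) * R \<and> 0 \<le> t \<longrightarrow>
               (let dchi = (\<Sum>\<^sub>\<infinity>\<alpha>. vector_derivative (\<lambda>s. Fcoef f g \<alpha> (p * q) s)
                                      (at t within {0..}) * p ^ fst \<alpha> * q ^ snd \<alpha>)
                in (\<lambda>\<alpha>. Fcoef f g \<alpha> (p * q) t * p ^ fst \<alpha> * q ^ snd \<alpha>) summable_on UNIV \<and>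
                   cmod (chi f g p q t) \<le> 4 * M / (\<omega> * \<delta>\<^sup>2) \<and>
                   (\<lambda>\<alpha>. vector_derivative (\<lambda>s. Fcoef f g \<alpha> (p * q) s) (at t within {0..})
                         * p ^ fst \<alpha> * q ^ snd \<alpha>) summable_on UNIV \<and>
                   cmod dchi \<le> 4 * M / (\<omega> * \<delta>\<^sup>2) \<and>
                   ((\<lambda>s. chi f g p q s) has_vector_derivative dchi) (at t within {0..}) \<and>
                   (\<exists>dp dq. ((\<lambda>p'. chi f g p' q t) has_field_derivative dp) (at p) \<and>
                            ((\<lambda>q'. chi f g p q' t) has_field_derivative dq) (at q) \<and>
                            g (p * q) t * (q * dq - p * dp) + dchi = taylor_eval f p q t))))"
proof -
  interpret homological_equation \<omega> R M f g
    by unfold_locales (fact assms)+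
  let "?differentiable \<and> (\<forall>\<delta>. ?admissible \<delta> \<longrightarrow> ?coef_sum \<delta> \<and> ?deriv_sum \<delta> \<and> ?polydisc \<delta>)" = ?thesis
  have ?differentiable by (auto intro: Fcoef_differentiable)
  moreover have "?coef_sum \<delta> \<and> ?deriv_sum \<delta> \<and> ?polydisc \<delta>" if \<delta>: "0 < \<delta>" "\<delta> < 1" for \<delta>
  proof -
    note C = homological_constants_le[OF \<omega> M \<delta>]
    have \<rho>: "0 \<le> (1 - \<delta>) * R" "(1 - \<delta>) * R \<le> R" "(1 - \<delta>) * R < R" using \<delta> R by auto
    let "\<forall>p q t. ?inside p q t \<longrightarrow> ?chi_facts p q t" = "?polydisc \<delta>"
    have "?chi_facts p q t" if "?inside p q t" for p q t
    proof -
      have p: "cmod p < R" and q: "cmod q < R" and t: "0 \<le> t" using that \<rho> by auto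
      note pq = less_imp_le[OF p] less_imp_le[OF q]
      show ?thesis
        unfolding Let_def
        using chi_series_bound[OF pq t] chi_derivative_series_bound[OF pq t]
          chi_has_vector_derivative[OF pq t] chi_homological_equation[OF p q t] C
        by auto
    qed
    moreover have "?coef_sum \<delta>"
      using SUP_Fcoef_infsum_le[OF \<rho>(1,2)] C(1) by (auto intro: order_trans ennreal_leI)
    moreover have "?deriv_sum \<delta>"
      using SUP_vector_derivative_Fcoef_infsum_le[OF \<rho>(1,2)] C(2)
      by (auto intro: order_trans ennreal_leI)
    ultimately show ?thesis by blast
  qed
  ultimately show ?thesis by blast
qed

end
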